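(* Suppose there is a $\Lambda$-semibranching function system $\{\tau_\lambda, \tau^n\}$ on a measure space $(X, \mu)$, where $\Lambda$ is a row-finite source-free $k$-graph. If $A\subseteq X$ is invariant with respect to $\tau^n$ for all $n\in\mathbb{N}^k$, and $\mu(A \cap D_v)\neq 0$ for all $v\in\Lambda^0$, then the restriction of a $\Lambda$-projective system on $(X, \mu)$ to $(X, \mu_A)$ is again a $\Lambda$-projective system; that is, the same maps $\{\tau_\lambda,\tau^n\}$ form a $\Lambda$-semibranching function system on $(X,\mu_A)$, and if $\{f_\lambda\}$ are functions making $\{\tau_\lambda,\tau^n\}$ a $\Lambda$-projective system on $(X,\mu)$, then the restrictions $\{f_\lambda|_A\}$ make it a $\Lambda$-projective system on $(X,\mu_A)$.
   Context: A $k$-graph is a countable small category $\Lambda$ with a functor $d:\Lambda\to\mathbb{N}^k$ with unique factorization; vertices $\Lambda^0$, range/source $r,s$; row-finite/source-free: $v\Lambda^n$ finite/nonempty. A semibranching function system on $(X,\mu)$: measurable $D_i$ with $0<\mu(D_i)<\infty$, measurable $\sigma_i:D_i\to X$, $R_i=\sigma_i(D_i)$ with $\mu(X\setminus\bigcup_iR_i)=0$, $\mu(R_i\cap R_j)=0$ ($i\ne j$), $\mu(R_i)<\infty$, and $d(\mu\circ\sigma_i)/d\mu>0$ a.e. on $D_i$; coding map $\sigma$: $\sigma\circ\sigma_i=\mathrm{id}_{D_i}$. A $\Lambda$-semibranching function system: measurable $D_\lambda$, $\tau_\lambda:D_\lambda\to X$, $\tau^m:X\to X$ ($m\in\mathbb{N}^k$)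 with: for each $m$, $\{\tau_\lambda:d(\lambda)=m\}$ is a semibranching function system with coding map $\tau^m$; $\tau_v=\mathrm{id}$ for $v\in\Lambda^0$ (so $D_v=R_v$); $R_\lambda=\tau_\lambda(D_\lambda)$, and for $\nu\in s(\lambda)\Lambda$, $R_\nu\subseteq D_\lambda$ a.e. and $\tau_\lambda\tau_\nu=\tau_{\lambda\nu}$ a.e.; $\tau^m\tau^n=\tau^{m+n}$. A $\Lambda$-projective system is a $\Lambda$-semibranching function system plus functions $f_\lambda\in L^2(X,\mu)$ with $0\ne d(\mu\circ\tau_\lambda^{-1})/d\mu=|f_\lambda|^2$ and $f_\lambda(f_\nu\circ\tau^{d(\lambda)})=f_{\lambda\nu}$. A set $B$ is invariant with respect to $T:X\to X$ if $\mu(T^{-1}(B)\,\Delta\,B)=0$. $\mu_A(B)=\mu(B\cap A)$, with $\mu_A$-measurable sets $\{B\cap A: B \text{ measurable}\}$. *)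

theory Defs
  imports "HOL-Analysis.Analysis"
begin

text \<open>N^k, represented as functions nat \<Rightarrow> nat vanishing from index k on.\<close>
definition Nk :: "nat \<Rightarrow> (nat \<Rightarrow> nat) set" where
  "Nk k = {m. \<forall>i\<ge>k. m i = 0}"

definition addk :: "(nat \<Rightarrow> nat) \<Rightarrow> (nat \<Rightarrow> nat) \<Rightarrow> (nat \<Rightarrow> nat)" where
  "addk m n = (\<lambda>i. m i + n i)"

text \<open>A small category given by its morphisms, objects (identity morphisms),
  range, source, composition (cmp l n = l n, defined when src l = rng n) and degree functor.\<close>
record 'p kgraph =
  Mor :: "'p set"
  Obj :: "'p set"
  rng :: "'p \<Rightarrow> 'p"
  src :: "'p \<Rightarrow> 'p"
  cmp :: "'p \<Rightarrow> 'p \<Rightarrow> 'p"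
  deg :: "'p \<Rightarrow> nat \<Rightarrow> nat"

definition is_kgraph :: "nat \<Rightarrow> 'p kgraph \<Rightarrow> bool" where
  "is_kgraph k G \<longleftrightarrow>
     countable (Mor G) \<and> Obj G \<subseteq> Mor G \<and>
     (\<forall>l\<in>Mor G. rng G l \<in> Obj G \<and> src G l \<in> Obj G) \<and>
     (\<forall>v\<in>Obj G. rng G v = v \<and> src G v = v) \<and>
     (\<forall>l\<in>Mor G. \<forall>n\<in>Mor G. src G l = rng G n \<longrightarrow>
        cmp G l n \<in> Mor G \<and> rng G (cmp G l n) = rng G l \<and> src G (cmp G l n) = src G n) \<and>
     (\<forall>l\<in>Mor G. cmp G (rng G l) l = l \<and> cmp G l (src G l) = l) \<and>
     (\<forall>l\<in>Mor G. \<forall>n\<in>Mor G. \<forall>p\<in>Mor G. src G l = rng G n \<longrightarrow> src G n = rng G p \<longrightarrow>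
        cmp G (cmp G l n) p = cmp G l (cmp G n p)) \<and>
     (\<forall>l\<in>Mor G. deg G l \<in> Nk k) \<and>
     (\<forall>l\<in>Mor G. \<forall>n\<in>Mor G. src G l = rng G n \<longrightarrow>
        deg G (cmp G l n) = addk (deg G l) (deg G n)) \<and>
     (\<forall>l\<in>Mor G. \<forall>m\<in>Nk k. \<forall>n\<in>Nk k. deg G l = addk m n \<longrightarrow>
        (\<exists>!(a, b). a \<in> Mor G \<and> b \<in> Mor G \<and> src G a = rng G b \<and>
            deg G a = m \<and> deg G b = n \<and> l = cmp G a b))"

definition row_finite :: "nat \<Rightarrow> 'p kgraph \<Rightarrow> bool" where
  "row_finite k G \<longleftrightarrow> (\<forall>v\<in>Obj G. \<forall>n\<in>Nk k. finite {l\<in>Mor G. rng G l = v \<and> deg G l = n})"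

definition source_free :: "nat \<Rightarrow> 'p kgraph \<Rightarrow> bool" where
  "source_free k G \<longleftrightarrow> (\<forall>v\<in>Obj G. \<forall>n\<in>Nk k. {l\<in>Mor G. rng G l = v \<and> deg G l = n} \<noteq> {})"

text \<open>The Radon--Nikodym condition d(mu o sigma_i)/d mu > 0 a.e. on D_i is spelled out as the
  existence of a density g, positive a.e. on D_i, with mu(sigma_i B) = int_B g dmu for all
  measurable B \<subseteq> D_i.\<close>
definition sbfs :: "'x measure \<Rightarrow> 'i set \<Rightarrow> ('i \<Rightarrow> 'x set) \<Rightarrow> ('i \<Rightarrow> 'x \<Rightarrow> 'x) \<Rightarrow> ('x \<Rightarrow> 'x) \<Rightarrow> bool" where
  "sbfs M I D \<sigma> c \<longleftrightarrow>
     (\<forall>i\<in>I. D i \<in> sets M \<and> 0 < emeasure M (D i) \<and> emeasure M (D i) < \<infinity> \<and>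
        \<sigma> i \<in> measurable (restrict_space M (D i)) M \<and>
        (\<forall>B\<in>sets M. B \<subseteq> D i \<longrightarrow> \<sigma> i ` B \<in> sets M) \<and>
        emeasure M (\<sigma> i ` D i) < \<infinity> \<and>
        (\<exists>g\<in>borel_measurable M. (AE x in M. x \<in> D i \<longrightarrow> 0 < g x) \<and>
           (\<forall>B\<in>sets M. B \<subseteq> D i \<longrightarrow>
              emeasure M (\<sigma> i ` B) = (\<integral>\<^sup>+ x. g x * indicator B x \<partial>M))) \<and>
        (\<forall>x\<in>D i. c (\<sigma> i x) = x)) \<and>
     emeasure M (space M - (\<Union>i\<in>I. \<sigma> i ` D i)) = 0 \<and>
     (\<forall>i\<in>I. \<forall>j\<in>I. i \<noteq> j \<longrightarrow> emeasure M (\<sigma> i ` D i \<inter> \<sigma> j ` D j) = 0)"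

text \<open>Lambda-semibranching function system {tau_l, T n} (T n is tau^n).\<close>
definition Lambda_sbfs :: "nat \<Rightarrow> 'p kgraph \<Rightarrow> 'x measure \<Rightarrow> ('p \<Rightarrow> 'x set) \<Rightarrow>
    ('p \<Rightarrow> 'x \<Rightarrow> 'x) \<Rightarrow> ((nat \<Rightarrow> nat) \<Rightarrow> 'x \<Rightarrow> 'x) \<Rightarrow> bool" where
  "Lambda_sbfs k G M D \<tau> T \<longleftrightarrow>
     (\<forall>m\<in>Nk k. sbfs M {l\<in>Mor G. deg G l = m} D \<tau> (T m)) \<and>
     (\<forall>m\<in>Nk k. T m \<in> measurable M M) \<and>
     (\<forall>v\<in>Obj G. \<forall>x\<in>D v. \<tau> v x = x) \<and>
     (\<forall>l\<in>Mor G. \<forall>n\<in>Mor G. src G l = rng G n \<longrightarrow>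
        emeasure M (\<tau> n ` D n - D l) = 0 \<and>
        (AE x in M. (x \<in> D (cmp G l n) \<longleftrightarrow> x \<in> D n) \<and>
                    (x \<in> D n \<longrightarrow> \<tau> l (\<tau> n x) = \<tau> (cmp G l n) x))) \<and>
     (\<forall>m\<in>Nk k. \<forall>n\<in>Nk k. \<forall>x\<in>space M. T m (T n x) = T (addk m n) x)"

definition Lambda_projective :: "nat \<Rightarrow> 'p kgraph \<Rightarrow> 'x measure \<Rightarrow> ('p \<Rightarrow> 'x set) \<Rightarrow>
    ('p \<Rightarrow> 'x \<Rightarrow> 'x) \<Rightarrow> ((nat \<Rightarrow> nat) \<Rightarrow> 'x \<Rightarrow> 'x) \<Rightarrow> ('p \<Rightarrow> 'x \<Rightarrow> complex) \<Rightarrow> bool" where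
  "Lambda_projective k G M D \<tau> T f \<longleftrightarrow>
     Lambda_sbfs k G M D \<tau> T \<and>
     (\<forall>l\<in>Mor G. f l \<in> borel_measurable M \<and>
        integrable M (\<lambda>x. (cmod (f l x))\<^sup>2) \<and>
        \<not> (AE x in M. f l x = 0) \<and>
        (\<forall>B\<in>sets M. emeasure M {x \<in> D l. \<tau> l x \<in> B} =
            (\<integral>\<^sup>+ x. ennreal ((cmod (f l x))\<^sup>2) * indicator B x \<partial>M))) \<and>
     (\<forall>l\<in>Mor G. \<forall>n\<in>Mor G. src G l = rng G n \<longrightarrow>
        (AE x in M. f l x * f n (T (deg G l) x) = f (cmp G l n) x))"

definition invariant_set :: "'x measure \<Rightarrow> ('x \<Rightarrow> 'x) \<Rightarrow> 'x set \<Rightarrow> bool" where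
  "invariant_set M T B \<longleftrightarrow> emeasure M (((T -` B \<inter> space M) - B) \<union> (B - (T -` B \<inter> space M))) = 0"

definition restr_measure :: "'x measure \<Rightarrow> 'x set \<Rightarrow> 'x measure" where
  "restr_measure M A = density M (indicator A)"

end

theory Submission imports Defs begin

text \<open>Since \<open>\<tau>\<^sup>n\<close> is a left inverse of every \<open>\<tau>\<^sub>\<lambda>\<close> with \<open>d(\<lambda>) = n\<close> and \<open>A\<close> is
  \<open>\<tau>\<^sup>n\<close>-invariant, \<open>y \<in> A \<longleftrightarrow> \<tau>\<^sup>n y \<in> A\<close> for almost every \<open>y\<close>. Taking \<open>y = \<tau>\<^sub>\<lambda> x\<close> gives
  \<open>A \<inter> \<tau>\<^sub>\<lambda>(B) = \<tau>\<^sub>\<lambda>(B \<inter> A)\<close> up to a null set, and also \<open>A \<inter> \<tau>\<^sub>\<lambda>\<^sup>-\<^sup>1(B) = \<tau>\<^sub>\<lambda>\<^sup>-\<^sup>1(B \<inter> A)\<close>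
  up to a null set, because \<open>\<tau>\<^sub>\<lambda>\<close> pushes \<open>\<mu>\<close> forward to \<open>|f\<^sub>\<lambda>|\<^sup>2 \<mu>\<close>, so preimages of null sets
  are null. Hence the Radon--Nikodym derivatives with respect to \<open>\<mu>\<close> also serve for \<open>\<mu>\<^sub>A\<close>,
  and almost-everywhere statements pass from \<open>\<mu>\<close> to \<open>\<mu>\<^sub>A\<close>. Finally \<open>\<mu>\<^sub>A(D\<^sub>\<lambda>) > 0\<close> because
  \<open>D\<^bsub>s(\<lambda>)\<^esub> \<subseteq> D\<^sub>\<lambda>\<close> almost everywhere.\<close>

lemma sets_restr_measure [simp]: "sets (restr_measure M A) = sets M"
  and space_restr_measure [simp]: "space (restr_measure M A) = space M"
  by (simp_all add: restr_measure_def)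

lemma measurable_restr_measure [simp]:
  "measurable (restr_measure M A) N = measurable M N"
  "measurable N (restr_measure M A) = measurable N M"
  "measurable (restrict_space (restr_measure M A) S) N = measurable (restrict_space M S) N"
  by (auto intro!: measurable_cong_sets sets_restrict_space_cong)

lemma emeasure_restr_measure:
  "A \<in> sets M \<Longrightarrow> X \<in> sets M \<Longrightarrow> emeasure (restr_measure M A) X = emeasure M (A \<inter> X)"
  unfolding restr_measure_def by (rule emeasure_restricted)

lemma emeasure_restr_measure_null:
  assumes "A \<in> sets M" and "emeasure M X = 0"
  shows "emeasure (restr_measure M A) X = 0"
proof (cases "X \<in> sets M")
  case True
  then have "emeasure M (A \<inter> X) \<le> emeasure M X" by (intro emeasure_mono) auto
  with True assms show ?thesis by (simp add: emeasure_restr_measure)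
qed (simp add: emeasure_notin_sets)

lemma AE_restr_measure_iff:
  "A \<in> sets M \<Longrightarrow> (AE x in restr_measure M A. P x) \<longleftrightarrow> (AE x in M. x \<in> A \<longrightarrow> P x)"
  unfolding restr_measure_def by (subst AE_density) (auto simp: indicator_def)

lemma AE_restr_measure: "A \<in> sets M \<Longrightarrow> (AE x in M. P x) \<Longrightarrow> (AE x in restr_measure M A. P x)"
  by (auto simp: AE_restr_measure_iff elim: eventually_mono)

lemma nn_integral_restr_measure:
  "A \<in> sets M \<Longrightarrow> g \<in> borel_measurable M \<Longrightarrow>
    (\<integral>\<^sup>+ x. g x \<partial>restr_measure M A) = (\<integral>\<^sup>+ x. indicator A x * g x \<partial>M)"
  unfolding restr_measure_def by (rule nn_integral_density) auto

lemma integrable_restr_measure: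
  fixes f :: "'a \<Rightarrow> 'b::{banach, second_countable_topology}"
  assumes "A \<in> sets M" and "integrable M f"
  shows "integrable (restr_measure M A) f"
proof -
  have "density M (indicator A) = density M (\<lambda>x. ennreal (indicator A x))"
    by (simp add: ennreal_indicator)
  with assms show ?thesis
    unfolding restr_measure_def
    by (simp add: integrable_density integrable_mult_indicator borel_measurable_integrable)
qed

lemma AE_invariant_set:
  assumes "invariant_set M T A" and "T \<in> M \<rightarrow>\<^sub>M M" and "A \<in> sets M"
  shows "AE x in M. T x \<in> A \<longleftrightarrow> x \<in> A"
proof -
  let ?E = "((T -` A \<inter> space M) - A) \<union> (A - (T -` A \<inter> space M))"
  have "?E \<in> null_sets M"
    using assms unfolding invariant_set_def by (auto intro: measurable_sets)
  then have "AE x in M. x \<notin> ?E" by (rule AE_not_in)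
  with AE_space show ?thesis by eventually_elim auto
qed

lemma sets_preimage_restrict_space:
  assumes "t \<in> restrict_space M D \<rightarrow>\<^sub>M N" and "D \<in> sets M" and "B \<in> sets N"
  shows "{x \<in> D. t x \<in> B} \<in> sets M"
proof -
  have "t -` B \<inter> space (restrict_space M D) \<in> sets (restrict_space M D)"
    using assms(1,3) by (rule measurable_sets)
  moreover have "t -` B \<inter> space (restrict_space M D) = {x \<in> D. t x \<in> B}"
    using assms(2) sets.sets_into_space by (auto simp: space_restrict_space)
  ultimately show ?thesis
    using assms(2) by (simp add: sets_restrict_space_iff)
qed

lemma restrict_space_measurable_into_space:
  assumes "t \<in> restrict_space M D \<rightarrow>\<^sub>M N" and "D \<in> sets M" and "x \<in> D"
  shows "t x \<in> space N"
  using measurable_space[OF assms(1)] assms(2,3) sets.sets_into_space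
  by (auto simp: space_restrict_space)

lemma AE_preimage_density:
  assumes t: "t \<in> restrict_space M D \<rightarrow>\<^sub>M M" and D: "D \<in> sets M"
    and density: "\<forall>B\<in>sets M. emeasure M {x \<in> D. t x \<in> B} = (\<integral>\<^sup>+ x. h x * indicator B x \<partial>M)"
    and P: "AE y in M. P y"
  shows "AE x in M. x \<in> D \<longrightarrow> P (t x)"
proof -
  from P obtain N where N: "{y \<in> space M. \<not> P y} \<subseteq> N" "N \<in> null_sets M"
    by (auto elim!: AE_E)
  have "emeasure M {x \<in> D. t x \<in> N} = 0"
    using density N(2) nn_integral_null_set[OF N(2)] by auto
  then have "{x \<in> D. t x \<in> N} \<in> null_sets M"
    using sets_preimage_restrict_space[OF t D] N(2) by auto
  moreover have "{x \<in> space M. \<not> (x \<in> D \<longrightarrow> P (t x))} \<subseteq> {x \<in> D. t x \<in> N}"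
    using N(1) restrict_space_measurable_into_space[OF t D] by auto
  ultimately show ?thesis by (rule AE_I')
qed

definition sbfs_branch :: "'x measure \<Rightarrow> ('i \<Rightarrow> 'x set) \<Rightarrow> ('i \<Rightarrow> 'x \<Rightarrow> 'x) \<Rightarrow> ('x \<Rightarrow> 'x) \<Rightarrow> 'i \<Rightarrow> bool"
  where "sbfs_branch M D \<sigma> c i \<longleftrightarrow>
    D i \<in> sets M \<and> 0 < emeasure M (D i) \<and> emeasure M (D i) < \<infinity> \<and>
    \<sigma> i \<in> measurable (restrict_space M (D i)) M \<and>
    (\<forall>B\<in>sets M. B \<subseteq> D i \<longrightarrow> \<sigma> i ` B \<in> sets M) \<and>
    emeasure M (\<sigma> i ` D i) < \<infinity> \<and>
    (\<exists>g\<in>borel_measurable M. (AE x in M. x \<in> D i \<longrightarrow> 0 < g x) \<and>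
       (\<forall>B\<in>sets M. B \<subseteq> D i \<longrightarrow>
          emeasure M (\<sigma> i ` B) = (\<integral>\<^sup>+ x. g x * indicator B x \<partial>M))) \<and>
    (\<forall>x\<in>D i. c (\<sigma> i x) = x)"

lemma sbfs_iff_branches:
  "sbfs M I D \<sigma> c \<longleftrightarrow> (\<forall>i\<in>I. sbfs_branch M D \<sigma> c i) \<and>
     emeasure M (space M - (\<Union>i\<in>I. \<sigma> i ` D i)) = 0 \<and>
     (\<forall>i\<in>I. \<forall>j\<in>I. i \<noteq> j \<longrightarrow> emeasure M (\<sigma> i ` D i \<inter> \<sigma> j ` D j) = 0)"
  unfolding sbfs_def sbfs_branch_def ..

lemma sbfs_branchD:
  assumes "sbfs_branch M D \<sigma> c i"
  shows "D i \<in> sets M" and "0 < emeasure M (D i)" and "\<sigma> i \<in> restrict_space M (D i) \<rightarrow>\<^sub>M M"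
    and "\<forall>x\<in>D i. c (\<sigma> i x) = x"
  using assms unfolding sbfs_branch_def by blast+

lemma sbfs_branch_restr_measure:
  assumes branch: "sbfs_branch M D \<sigma> c i" and A: "A \<in> sets M"
    and invariant: "AE y in M. c y \<in> A \<longleftrightarrow> y \<in> A" and pos: "emeasure M (A \<inter> D i) \<noteq> 0"
  shows "sbfs_branch (restr_measure M A) D \<sigma> c i"
proof -
  let ?N = "restr_measure M A"
  from branch have D: "D i \<in> sets M" and fin: "emeasure M (D i) < \<infinity>"
    and meas: "\<sigma> i \<in> restrict_space M (D i) \<rightarrow>\<^sub>M M"
    and img: "\<forall>B\<in>sets M. B \<subseteq> D i \<longrightarrow> \<sigma> i ` B \<in> sets M"
    and img_fin: "emeasure M (\<sigma> i ` D i) < \<infinity>"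
    and left_inverse: "\<forall>x\<in>D i. c (\<sigma> i x) = x"
    unfolding sbfs_branch_def by blast+
  from branch obtain g where g: "g \<in> borel_measurable M" "AE x in M. x \<in> D i \<longrightarrow> 0 < g x"
    and density: "\<forall>B\<in>sets M. B \<subseteq> D i \<longrightarrow> emeasure M (\<sigma> i ` B) = (\<integral>\<^sup>+ x. g x * indicator B x \<partial>M)"
    unfolding sbfs_branch_def by blast
  have restr_finite: "emeasure ?N S < \<infinity>" if "S \<in> sets M" "emeasure M S < \<infinity>" for S
    using that A emeasure_mono[of "A \<inter> S" S M] by (simp add: emeasure_restr_measure)
  have restr_density: "\<forall>B\<in>sets M. B \<subseteq> D i \<longrightarrow>
      emeasure ?N (\<sigma> i ` B) = (\<integral>\<^sup>+ x. g x * indicator B x \<partial>?N)"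
  proof (intro ballI impI)
    fix B assume B: "B \<in> sets M" "B \<subseteq> D i"
    have "emeasure ?N (\<sigma> i ` B) = emeasure M (A \<inter> \<sigma> i ` B)"
      using A B img by (simp add: emeasure_restr_measure)
    also have "\<dots> = emeasure M (\<sigma> i ` (B \<inter> A))"
    proof (rule emeasure_eq_AE)
      show "AE y in M. y \<in> A \<inter> \<sigma> i ` B \<longleftrightarrow> y \<in> \<sigma> i ` (B \<inter> A)"
        using invariant by eventually_elim (use B left_inverse in force)
    qed (use A B img[rule_format, of B] img[rule_format, of "B \<inter> A"] in auto)
    also have "\<dots> = (\<integral>\<^sup>+ x. g x * indicator (B \<inter> A) x \<partial>M)"
      using density[rule_format, of "B \<inter> A"] A B by auto
    also have "\<dots> = (\<integral>\<^sup>+ x. indicator A x * (g x * indicator B x) \<partial>M)"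
      by (intro nn_integral_cong) (auto simp: indicator_def)
    also have "\<dots> = (\<integral>\<^sup>+ x. g x * indicator B x \<partial>?N)"
      using A B g by (simp add: nn_integral_restr_measure)
    finally show "emeasure ?N (\<sigma> i ` B) = (\<integral>\<^sup>+ x. g x * indicator B x \<partial>?N)" .
  qed
  have restr_pos: "0 < emeasure ?N (D i)"
    using A D pos by (simp add: emeasure_restr_measure zero_less_iff_neq_zero)
  have img_D: "\<sigma> i ` D i \<in> sets M"
    using img D by blast
  show ?thesis
    unfolding sbfs_branch_def sets_restr_measure measurable_restr_measure
    using D restr_pos restr_finite[OF D fin] meas img restr_finite[OF img_D img_fin]
      g(1) AE_restr_measure[OF A g(2)] restr_density left_inverse
    by (intro conjI bexI[of _ g]) assumption+
qed

lemma sbfs_restr_measure: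
  assumes "sbfs M I D \<sigma> c" and "A \<in> sets M" and "AE y in M. c y \<in> A \<longleftrightarrow> y \<in> A"
    and "\<forall>i\<in>I. emeasure M (A \<inter> D i) \<noteq> 0"
  shows "sbfs (restr_measure M A) I D \<sigma> c"
  using assms
  by (auto simp: sbfs_iff_branches intro: sbfs_branch_restr_measure emeasure_restr_measure_null)

lemma is_kgraphD:
  assumes "is_kgraph k G"
  shows "Obj G \<subseteq> Mor G"
    and "l \<in> Mor G \<Longrightarrow> src G l \<in> Obj G"
    and "v \<in> Obj G \<Longrightarrow> rng G v = v"
    and "l \<in> Mor G \<Longrightarrow> deg G l \<in> Nk k"
  using assms unfolding is_kgraph_def by auto

lemma Lambda_sbfs_branch:
  assumes G: "is_kgraph k G" and S: "Lambda_sbfs k G M D \<tau> T" and l: "l \<in> Mor G"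
  shows "sbfs_branch M D \<tau> (T (deg G l)) l"
proof -
  have "sbfs M {l' \<in> Mor G. deg G l' = deg G l} D \<tau> (T (deg G l))"
    using S is_kgraphD(4)[OF G l] unfolding Lambda_sbfs_def by blast
  with l show ?thesis by (simp add: sbfs_iff_branches)
qed

lemma Lambda_sbfs_domain_sets:
  "is_kgraph k G \<Longrightarrow> Lambda_sbfs k G M D \<tau> T \<Longrightarrow> l \<in> Mor G \<Longrightarrow> D l \<in> sets M"
  by (rule sbfs_branchD(1)[OF Lambda_sbfs_branch])

text \<open>\<open>D\<^bsub>s(\<lambda>)\<^esub> = \<tau>\<^bsub>s(\<lambda>)\<^esub>(D\<^bsub>s(\<lambda>)\<^esub>)\<close> is a.e. contained in \<open>D\<^sub>\<lambda>\<close> by the composition axiom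
  applied to \<open>\<lambda> = \<lambda> s(\<lambda>)\<close>.\<close>

lemma Lambda_sbfs_AE_source_domain:
  assumes G: "is_kgraph k G" and S: "Lambda_sbfs k G M D \<tau> T" and l: "l \<in> Mor G"
  shows "AE x in M. x \<in> D (src G l) \<longrightarrow> x \<in> D l"
proof -
  let ?v = "src G l"
  have v: "?v \<in> Obj G" "?v \<in> Mor G" "src G l = rng G ?v"
    using is_kgraphD[OF G] l by auto
  have "emeasure M (\<tau> ?v ` D ?v - D l) = 0"
    using S l v unfolding Lambda_sbfs_def by blast
  moreover have "\<tau> ?v ` D ?v = D ?v"
    using S v(1) unfolding Lambda_sbfs_def by force
  ultimately have "D ?v - D l \<in> null_sets M"
    using Lambda_sbfs_domain_sets[OF G S] l v(2) by auto
  then show ?thesis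
    by (rule AE_not_in[THEN eventually_mono]) blast
qed

lemma Lambda_sbfs_restr_measure:
  assumes G: "is_kgraph k G" and S: "Lambda_sbfs k G M D \<tau> T" and A: "A \<in> sets M"
    and invariant: "\<forall>m\<in>Nk k. AE x in M. T m x \<in> A \<longleftrightarrow> x \<in> A"
    and pos: "\<forall>v\<in>Obj G. emeasure M (A \<inter> D v) \<noteq> 0"
  shows "Lambda_sbfs k G (restr_measure M A) D \<tau> T"
proof -
  have pos_Mor: "emeasure M (A \<inter> D l) \<noteq> 0" if l: "l \<in> Mor G" for l
  proof -
    have "emeasure M (A \<inter> D (src G l)) \<le> emeasure M (A \<inter> D l)"
      using Lambda_sbfs_AE_source_domain[OF G S l] A Lambda_sbfs_domain_sets[OF G S l]
      by (intro emeasure_mono_AE) (auto elim!: eventually_mono)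
    with pos is_kgraphD(2)[OF G l] show ?thesis by auto
  qed
  show ?thesis
    using S A invariant pos_Mor unfolding Lambda_sbfs_def
    by (auto intro!: sbfs_restr_measure AE_restr_measure emeasure_restr_measure_null)
qed

lemma emeasure_restr_measure_preimage:
  assumes D: "D \<in> sets M" and t: "t \<in> restrict_space M D \<rightarrow>\<^sub>M M"
    and left_inverse: "\<forall>x\<in>D. c (t x) = x"
    and A: "A \<in> sets M" and invariant: "AE y in M. c y \<in> A \<longleftrightarrow> y \<in> A"
    and h: "h \<in> borel_measurable M"
    and density: "\<forall>B\<in>sets M. emeasure M {x \<in> D. t x \<in> B} = (\<integral>\<^sup>+ x. h x * indicator B x \<partial>M)"
    and B: "B \<in> sets M"
  shows "emeasure (restr_measure M A) {x \<in> D. t x \<in> B} =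
    (\<integral>\<^sup>+ x. h x * indicator B x \<partial>restr_measure M A)"
proof -
  have preimage_sets: "{x \<in> D. t x \<in> B'} \<in> sets M" if "B' \<in> sets M" for B'
    using t D that by (rule sets_preimage_restrict_space)
  have "emeasure (restr_measure M A) {x \<in> D. t x \<in> B} = emeasure M (A \<inter> {x \<in> D. t x \<in> B})"
    using A B preimage_sets by (simp add: emeasure_restr_measure)
  also have "\<dots> = emeasure M {x \<in> D. t x \<in> B \<inter> A}"
  proof (rule emeasure_eq_AE)
    show "AE x in M. x \<in> A \<inter> {x \<in> D. t x \<in> B} \<longleftrightarrow> x \<in> {x \<in> D. t x \<in> B \<inter> A}"
      using AE_preimage_density[OF t D density invariant]
      by eventually_elim (use left_inverse in auto)
  qed (use A preimage_sets[OF B] preimage_sets[OF sets.Int[OF B A]] in auto)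
  also have "\<dots> = (\<integral>\<^sup>+ x. h x * indicator (B \<inter> A) x \<partial>M)"
    by (rule density[rule_format, OF sets.Int[OF B A]])
  also have "\<dots> = (\<integral>\<^sup>+ x. indicator A x * (h x * indicator B x) \<partial>M)"
    by (intro nn_integral_cong) (auto simp: indicator_def)
  also have "\<dots> = (\<integral>\<^sup>+ x. h x * indicator B x \<partial>restr_measure M A)"
    using A B h by (simp add: nn_integral_restr_measure)
  finally show ?thesis .
qed

lemma Lambda_projective_restr_measure:
  assumes G: "is_kgraph k G" and P: "Lambda_projective k G M D \<tau> T f" and A: "A \<in> sets M"
    and invariant: "\<forall>m\<in>Nk k. AE x in M. T m x \<in> A \<longleftrightarrow> x \<in> A"
    and pos: "\<forall>v\<in>Obj G. emeasure M (A \<inter> D v) \<noteq> 0"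
  shows "Lambda_projective k G (restr_measure M A) D \<tau> T (\<lambda>l x. if x \<in> A then f l x else 0)"
proof -
  let ?N = "restr_measure M A"
  let ?f = "\<lambda>l x. if x \<in> A then f l x else 0"
  have S: "Lambda_sbfs k G M D \<tau> T"
    and cocycle: "\<forall>l\<in>Mor G. \<forall>n\<in>Mor G. src G l = rng G n \<longrightarrow>
        (AE x in M. f l x * f n (T (deg G l) x) = f (cmp G l n) x)"
    using P by (simp_all add: Lambda_projective_def)
  have S_restr: "Lambda_sbfs k G ?N D \<tau> T"
    using G S A invariant pos by (rule Lambda_sbfs_restr_measure)
  have f_meas: "f l \<in> borel_measurable M"
    and f_square_integrable: "integrable M (\<lambda>x. (cmod (f l x))\<^sup>2)"
    and f_density: "\<forall>B\<in>sets M. emeasure M {x \<in> D l. \<tau> l x \<in> B} =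
        (\<integral>\<^sup>+ x. ennreal ((cmod (f l x))\<^sup>2) * indicator B x \<partial>M)"
    if "l \<in> Mor G" for l
    using P that by (simp_all add: Lambda_projective_def)
  have restr_meas: "?f l \<in> borel_measurable M" if "l \<in> Mor G" for l
    using f_meas[OF that] A by measurable
  have restr_square_integrable: "integrable ?N (\<lambda>x. (cmod (?f l x))\<^sup>2)" if "l \<in> Mor G" for l
  proof -
    have "integrable M (\<lambda>x. indicator A x *\<^sub>R (cmod (f l x))\<^sup>2)"
      using A f_square_integrable[OF that] by (rule integrable_mult_indicator)
    moreover have "(\<lambda>x. indicator A x *\<^sub>R (cmod (f l x))\<^sup>2) = (\<lambda>x. (cmod (?f l x))\<^sup>2)"
      by (auto simp: indicator_def)
    ultimately have "integrable M (\<lambda>x. (cmod (?f l x))\<^sup>2)"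
      by simp
    with A show ?thesis by (rule integrable_restr_measure)
  qed
  have restr_density: "emeasure ?N {x \<in> D l. \<tau> l x \<in> B} =
      (\<integral>\<^sup>+ x. ennreal ((cmod (?f l x))\<^sup>2) * indicator B x \<partial>?N)"
    if l: "l \<in> Mor G" and B: "B \<in> sets M" for l B
  proof -
    have branch: "sbfs_branch M D \<tau> (T (deg G l)) l"
      using G S l by (rule Lambda_sbfs_branch)
    have "AE y in M. T (deg G l) y \<in> A \<longleftrightarrow> y \<in> A"
      using invariant is_kgraphD(4)[OF G l] by blast
    with sbfs_branchD(1,3,4)[OF branch] A
    have "emeasure ?N {x \<in> D l. \<tau> l x \<in> B} =
        (\<integral>\<^sup>+ x. ennreal ((cmod (f l x))\<^sup>2) * indicator B x \<partial>?N)"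
      by (rule emeasure_restr_measure_preimage) (use f_meas[OF l] f_density[OF l] B in auto)
    also have "\<dots> = (\<integral>\<^sup>+ x. ennreal ((cmod (?f l x))\<^sup>2) * indicator B x \<partial>?N)"
      using A by (intro nn_integral_cong_AE) (simp add: AE_restr_measure_iff)
    finally show ?thesis .
  qed
  have restr_nonzero: "\<not> (AE x in ?N. ?f l x = 0)" if l: "l \<in> Mor G" for l
  proof
    assume "AE x in ?N. ?f l x = 0"
    then have "(\<integral>\<^sup>+ x. ennreal ((cmod (?f l x))\<^sup>2) * indicator (space M) x \<partial>?N) = (\<integral>\<^sup>+ x. 0 \<partial>?N)"
      by (intro nn_integral_cong_AE) (auto elim: eventually_mono)
    then have "emeasure ?N {x \<in> D l. \<tau> l x \<in> space M} = 0"
      using restr_density[OF l sets.top] by simp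
    moreover have "{x \<in> D l. \<tau> l x \<in> space M} = D l"
      using restrict_space_measurable_into_space[OF sbfs_branchD(3,1)[OF Lambda_sbfs_branch[OF G S l]]]
      by blast
    moreover have "0 < emeasure ?N (D l)"
      using sbfs_branchD(2)[OF Lambda_sbfs_branch[OF G S_restr l]] .
    ultimately show False by simp
  qed
  have restr_cocycle: "AE x in ?N. ?f l x * ?f n (T (deg G l) x) = ?f (cmp G l n) x"
    if "l \<in> Mor G" "n \<in> Mor G" "src G l = rng G n" for l n
  proof -
    have "AE x in M. T (deg G l) x \<in> A \<longleftrightarrow> x \<in> A"
      using invariant is_kgraphD(4)[OF G that(1)] by blast
    moreover have "AE x in M. f l x * f n (T (deg G l) x) = f (cmp G l n) x"
      using cocycle that by blast
    ultimately have "AE x in M. x \<in> A \<longrightarrow> ?f l x * ?f n (T (deg G l) x) = ?f (cmp G l n) x"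
      by eventually_elim auto
    with A show ?thesis by (simp add: AE_restr_measure_iff)
  qed
  show ?thesis
    unfolding Lambda_projective_def
    using S_restr restr_meas restr_square_integrable restr_nonzero restr_density restr_cocycle
    by (simp only: sets_restr_measure measurable_restr_measure) blast
qed

theorem proposition2p15:
  fixes k :: nat and G :: "'p kgraph" and M :: "'x measure"
    and D :: "'p \<Rightarrow> 'x set" and \<tau> :: "'p \<Rightarrow> 'x \<Rightarrow> 'x" and T :: "(nat \<Rightarrow> nat) \<Rightarrow> 'x \<Rightarrow> 'x"
    and A :: "'x set"
  assumes "is_kgraph k G" and "row_finite k G" and "source_free k G"
    and "Lambda_sbfs k G M D \<tau> T"
    and "A \<in> sets M"
    and "\<forall>n\<in>Nk k. invariant_set M (T n) A"
    and "\<forall>v\<in>Obj G. emeasure M (A \<inter> D v) \<noteq> 0"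
  shows "Lambda_sbfs k G (restr_measure M A) D \<tau> T \<and>
    (\<forall>f. Lambda_projective k G M D \<tau> T f \<longrightarrow>
       Lambda_projective k G (restr_measure M A) D \<tau> T (\<lambda>l x. if x \<in> A then f l x else 0))"
proof -
  have invariant: "\<forall>m\<in>Nk k. AE x in M. T m x \<in> A \<longleftrightarrow> x \<in> A"
  proof
    fix m assume m: "m \<in> Nk k"
    then have "T m \<in> M \<rightarrow>\<^sub>M M"
      using assms(4) unfolding Lambda_sbfs_def by blast
    with m assms(5,6) show "AE x in M. T m x \<in> A \<longleftrightarrow> x \<in> A"
      by (intro AE_invariant_set) auto
  qed
  show ?thesis
    using Lambda_sbfs_restr_measure[OF assms(1,4,5) invariant assms(7)]
      Lambda_projective_restr_measure[OF assms(1) _ assms(5) invariant assms(7)]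
    by blast
qed

end
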